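(* The following two statements are equivalent: (a) every nearly finitary matroid is $k$-nearly finitary for some $k\in\mathbb{N}$; (b) for every matroid $M$ that is not $k$-nearly finitary for any $k\in\mathbb{N}$, the near finitarization $M^{\mathrm{nfin}}$ is not a matroid.
   Context: Matroids (possibly infinite) $(E,\mathcal{L})$: $\emptyset\in\mathcal{L}$; subsets of independent sets independent; if $B$ is maximal and $A$ non-maximal in $\mathcal{L}$, then $A\cup\{b\}\in\mathcal{L}$ for some $b\in B\setminus A$; for $A\in\mathcal{L}$, $A\subseteq X\subseteq E$, $\{S\in\mathcal{L}:A\subseteq S\subseteq X\}$ has a maximal element. Bases are maximal independent sets. The finitarization $M^{\mathrm{fin}}=(E,\mathcal{L}^{\mathrm{fin}})$: sets all of whose finite subsets lie in $\mathcal{L}$. The near finitarization $M^{\mathrm{nfin}}=(E,\mathcal{L}^{\mathrm{nfin}})$ with $\mathcal{L}^{\mathrm{nfin}}=\{F\in\mathcal{L}^{\mathrm{fin}}:\exists S\in\mathcal{L},\ S\subseteq F,\ |F\setminus S|<\infty\}$. $M$ is nearly finitary if $F\setminus B$ is finite whenever a base $F$ of $M^{\mathrm{fin}}$ contains a base $B$ of $M$; $k$-nearly finitary if $|F\setminus B|\le k$ for all such pairs. *)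

theory Defs
  imports Main
begin

definition maximal_in :: "'a set set \<Rightarrow> 'a set \<Rightarrow> bool" where
  "maximal_in L B \<longleftrightarrow> B \<in> L \<and> (\<forall>C\<in>L. B \<subseteq> C \<longrightarrow> C = B)"

definition matroid :: "'a set \<Rightarrow> 'a set set \<Rightarrow> bool" where
  "matroid E L \<longleftrightarrow>
     (\<forall>I\<in>L. I \<subseteq> E) \<and>
     {} \<in> L \<and>
     (\<forall>A B. A \<in> L \<and> B \<subseteq> A \<longrightarrow> B \<in> L) \<and>
     (\<forall>A B. maximal_in L B \<and> A \<in> L \<and> \<not> maximal_in L A \<longrightarrow>
        (\<exists>b\<in>B - A. insert b A \<in> L)) \<and>
     (\<forall>A X. A \<in> L \<and> A \<subseteq> X \<and> X \<subseteq> E \<longrightarrow>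
        (\<exists>S. maximal_in {S \<in> L. A \<subseteq> S \<and> S \<subseteq> X} S))"

definition L_fin :: "'a set \<Rightarrow> 'a set set \<Rightarrow> 'a set set" where
  "L_fin E L = {F. F \<subseteq> E \<and> (\<forall>G. G \<subseteq> F \<and> finite G \<longrightarrow> G \<in> L)}"

definition L_nfin :: "'a set \<Rightarrow> 'a set set \<Rightarrow> 'a set set" where
  "L_nfin E L = {F \<in> L_fin E L. \<exists>S\<in>L. S \<subseteq> F \<and> finite (F - S)}"

definition nearly_finitary :: "'a set \<Rightarrow> 'a set set \<Rightarrow> bool" where
  "nearly_finitary E L \<longleftrightarrow>
     (\<forall>F B. maximal_in (L_fin E L) F \<and> maximal_in L B \<and> B \<subseteq> F \<longrightarrow> finite (F - B))"

definition k_nearly_finitary :: "nat \<Rightarrow> 'a set \<Rightarrow> 'a set set \<Rightarrow> bool" where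
  "k_nearly_finitary k E L \<longleftrightarrow>
     (\<forall>F B. maximal_in (L_fin E L) F \<and> maximal_in L B \<and> B \<subseteq> F \<longrightarrow>
        finite (F - B) \<and> card (F - B) \<le> k)"

end

theory Submission
  imports Defs
begin

text \<open>Both (a) and (b) say that the same matroids are k-nearly finitary for some k, because
  for a matroid M the near finitarization M^nfin is a matroid exactly when M is nearly
  finitary. The finitarization M^fin is always a matroid, and a maximal M-independent
  subset of a base of M^fin is a base of M; hence M is nearly finitary iff every base of
  M^fin is nearly independent. In that case M^nfin = M^fin, because near independence is
  closed under subsets. Conversely, if M^nfin is a matroid, a maximal nearly independent
  subset of a base F of M^fin is F itself, since adding one element of F keeps near
  independence, so F is nearly independent.\<close>

definition basis_of :: "'a set set \<Rightarrow> 'a set \<Rightarrow> 'a set \<Rightarrow> bool" where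
  "basis_of L X S \<longleftrightarrow> S \<in> L \<and> S \<subseteq> X \<and> (\<forall>T\<in>L. S \<subseteq> T \<longrightarrow> T \<subseteq> X \<longrightarrow> T = S)"

lemma maximal_inD: "maximal_in L B \<Longrightarrow> B \<in> L"
  unfolding maximal_in_def by blast

lemma maximal_in_insert: "maximal_in L B \<Longrightarrow> x \<notin> B \<Longrightarrow> insert x B \<notin> L"
  unfolding maximal_in_def by blast

lemma basis_ofD:
  assumes "basis_of L X S"
  shows "S \<in> L" "S \<subseteq> X" "T \<in> L \<Longrightarrow> S \<subseteq> T \<Longrightarrow> T \<subseteq> X \<Longrightarrow> T = S"
  using assms unfolding basis_of_def by blast+

lemma maximal_in_iff_basis_of:
  "maximal_in {S \<in> L. A \<subseteq> S \<and> S \<subseteq> X} S \<longleftrightarrow> basis_of L X S \<and> A \<subseteq> S"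
  unfolding maximal_in_def basis_of_def by blast

lemma maximal_in_iff_basis_of_ground:
  "\<forall>I\<in>L. I \<subseteq> E \<Longrightarrow> maximal_in L B \<longleftrightarrow> basis_of L E B"
  unfolding maximal_in_def basis_of_def by blast

lemma basis_of_subset: "basis_of L X S \<Longrightarrow> S \<subseteq> Y \<Longrightarrow> Y \<subseteq> X \<Longrightarrow> basis_of L Y S"
  unfolding basis_of_def by blast

lemma L_fin_subset: "F \<in> L_fin E L \<Longrightarrow> G \<subseteq> F \<Longrightarrow> G \<in> L_fin E L"
  unfolding L_fin_def by blast

lemma L_fin_ground: "F \<in> L_fin E L \<Longrightarrow> F \<subseteq> E"
  unfolding L_fin_def by blast

lemma L_fin_finite_subset: "F \<in> L_fin E L \<Longrightarrow> G \<subseteq> F \<Longrightarrow> finite G \<Longrightarrow> G \<in> L"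
  unfolding L_fin_def by blast

lemma L_fin_insert_obtain_finite_dependent:
  assumes "F \<in> L_fin E L" "x \<in> E" "insert x F \<notin> L_fin E L"
  obtains C where "C \<subseteq> F" "finite C" "insert x C \<notin> L"
proof -
  obtain G where G: "G \<subseteq> insert x F" "finite G" "G \<notin> L"
    using assms L_fin_ground[OF assms(1)] unfolding L_fin_def by auto
  have "x \<in> G"
    using G L_fin_finite_subset[OF assms(1), of G] by blast
  then have "insert x (G - {x}) \<notin> L"
    using G(3) by (simp add: insert_absorb)
  then show thesis using that[of "G - {x}"] G by blast
qed

lemma L_fin_maximal_exists:
  assumes "A \<in> L_fin E L" "A \<subseteq> X" "X \<subseteq> E"
  shows "\<exists>S. maximal_in {S \<in> L_fin E L. A \<subseteq> S \<and> S \<subseteq> X} S"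
proof -
  let ?\<A> = "{S \<in> L_fin E L. A \<subseteq> S \<and> S \<subseteq> X}"
  have "\<Union>\<C> \<in> ?\<A>" if "\<C> \<noteq> {}" and chain: "subset.chain ?\<A> \<C>" for \<C>
  proof -
    have \<C>: "\<C> \<subseteq> ?\<A>" using chain unfolding subset.chain_def by blast
    have "G \<in> L" if "G \<subseteq> \<Union>\<C>" "finite G" for G
    proof -
      obtain S where "S \<in> \<C>" "G \<subseteq> S"
        using finite_subset_Union_chain[OF \<open>finite G\<close> \<open>G \<subseteq> \<Union>\<C>\<close> \<open>\<C> \<noteq> {}\<close> chain] .
      then show "G \<in> L"
        using \<C> L_fin_finite_subset \<open>finite G\<close> by blast
    qed
    moreover have "\<Union>\<C> \<subseteq> X" "A \<subseteq> \<Union>\<C>" using \<C> \<open>\<C> \<noteq> {}\<close> by blast+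
    ultimately show ?thesis using assms(3) unfolding L_fin_def by blast
  qed
  then obtain S where "S \<in> ?\<A>" "\<forall>T\<in>?\<A>. S \<subseteq> T \<longrightarrow> T = S"
    using subset_Zorn_nonempty[of ?\<A>] assms by blast
  then show ?thesis unfolding maximal_in_def by blast
qed

lemma L_nfin_subset_L_fin: "L_nfin E L \<subseteq> L_fin E L"
  unfolding L_nfin_def by blast

lemma L_nfinE:
  assumes "F \<in> L_nfin E L"
  obtains S where "S \<in> L" "S \<subseteq> F" "finite (F - S)"
  using assms unfolding L_nfin_def by blast

lemma L_nfinI: "F \<in> L_fin E L \<Longrightarrow> S \<in> L \<Longrightarrow> S \<subseteq> F \<Longrightarrow> finite (F - S) \<Longrightarrow> F \<in> L_nfin E L"
  unfolding L_nfin_def by blast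

lemma L_nfin_insert:
  assumes "F \<in> L_nfin E L" "insert x F \<in> L_fin E L"
  shows "insert x F \<in> L_nfin E L"
proof -
  obtain S where "S \<in> L" "S \<subseteq> F" "finite (F - S)"
    using L_nfinE[OF assms(1)] by blast
  moreover have "insert x F - S \<subseteq> insert x (F - S)" by blast
  ultimately show ?thesis
    using L_nfinI[OF assms(2)] finite_subset by (metis finite_insert subset_insertI2)
qed

lemma basis_of_L_nfin_eq:
  assumes "basis_of (L_nfin E L) F S" "F \<in> L_fin E L"
  shows "S = F"
proof (rule ccontr)
  assume "S \<noteq> F"
  then obtain x where x: "x \<in> F" "x \<notin> S" using basis_ofD(2)[OF assms(1)] by blast
  have "insert x S \<subseteq> F" using x basis_ofD(2)[OF assms(1)] by blast
  then have "insert x S \<in> L_fin E L" using L_fin_subset[OF assms(2)] by blast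
  then have "insert x S \<in> L_nfin E L" by (rule L_nfin_insert[OF basis_ofD(1)[OF assms(1)]])
  then have "insert x S = S" using basis_ofD(3)[OF assms(1)] \<open>insert x S \<subseteq> F\<close> by blast
  then show False using x by blast
qed

context
  fixes E :: "'a set" and L :: "'a set set"
  assumes M: "matroid E L"
begin

lemma indep_subset_ground: "I \<in> L \<Longrightarrow> I \<subseteq> E"
  using M[unfolded matroid_def, THEN conjunct1] by blast

lemma empty_indep: "{} \<in> L"
  using M[unfolded matroid_def, THEN conjunct2, THEN conjunct1] .

lemma indep_subset: "I \<in> L \<Longrightarrow> J \<subseteq> I \<Longrightarrow> J \<in> L"
  using M[unfolded matroid_def, THEN conjunct2, THEN conjunct2, THEN conjunct1] by blast

lemma base_augment:
  "maximal_in L B \<Longrightarrow> I \<in> L \<Longrightarrow> \<not> maximal_in L I \<Longrightarrow> \<exists>b\<in>B - I. insert b I \<in> L"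
  using M[unfolded matroid_def, THEN conjunct2, THEN conjunct2, THEN conjunct2, THEN conjunct1]
  by blast

lemma exists_basis: "I \<in> L \<Longrightarrow> I \<subseteq> X \<Longrightarrow> X \<subseteq> E \<Longrightarrow> \<exists>S. basis_of L X S \<and> I \<subseteq> S"
  using M[unfolded matroid_def, THEN conjunct2, THEN conjunct2, THEN conjunct2, THEN conjunct2]
  unfolding maximal_in_iff_basis_of by blast

lemma base_iff_basis_of_ground: "maximal_in L B \<longleftrightarrow> basis_of L E B"
  using maximal_in_iff_basis_of_ground indep_subset_ground by blast

lemma exists_base:
  assumes "I \<in> L"
  obtains B where "maximal_in L B" "I \<subseteq> B"
  using exists_basis[OF assms indep_subset_ground[OF assms] order_refl] that
  unfolding base_iff_basis_of_ground by blast

lemma base_if_basis_of_superset_of_base: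
  assumes S: "basis_of L X S" and B: "maximal_in L B" "B \<subseteq> X"
  shows "maximal_in L S"
proof (rule ccontr)
  assume "\<not> maximal_in L S"
  then obtain b where b: "b \<in> B - S" "insert b S \<in> L"
    using base_augment[OF B(1) basis_ofD(1)[OF S]] by blast
  then have "insert b S = S" using basis_ofD(3)[OF S] B(2) basis_ofD(2)[OF S] by blast
  then show False using b by blast
qed

lemma exists_base_between:
  assumes "I \<in> L" "maximal_in L B"
  obtains B' where "maximal_in L B'" "I \<subseteq> B'" "B' \<subseteq> I \<union> B"
proof -
  have "B \<in> L" using maximal_inD[OF assms(2)] .
  then have "I \<union> B \<subseteq> E" using assms(1) indep_subset_ground by blast
  then obtain S where S: "basis_of L (I \<union> B) S" "I \<subseteq> S"
    using exists_basis assms(1) by blast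
  have "maximal_in L S" using base_if_basis_of_superset_of_base[OF S(1) assms(2)] by blast
  then show thesis using that S(2) basis_ofD(2)[OF S(1)] by blast
qed

lemma basis_of_eq_Int:
  assumes S: "basis_of L X S" and "S \<subseteq> I" "I \<in> L"
  shows "I \<inter> X = S"
proof
  show "I \<inter> X \<subseteq> S"
  proof
    fix y assume y: "y \<in> I \<inter> X"
    then have "insert y S \<in> L" using assms(2,3) indep_subset by blast
    then have "insert y S = S" using basis_ofD(3)[OF S] basis_ofD(2)[OF S] y by blast
    then show "y \<in> S" by blast
  qed
  show "S \<subseteq> I \<inter> X" using assms(2) basis_ofD(2)[OF S] by blast
qed

lemma card_base_diff_le:
  assumes "maximal_in L B1" "maximal_in L B2" "finite (B1 - B2)"
  shows "finite (B2 - B1) \<and> card (B2 - B1) \<le> card (B1 - B2)"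
  using assms
proof (induction "card (B1 - B2)" arbitrary: B1)
  case 0
  then have "B1 \<subseteq> B2" by auto
  then show ?case using 0 unfolding maximal_in_def by auto
next
  case (Suc n)
  then have "B1 - B2 \<noteq> {}" by (metis card.empty nat.distinct(1))
  then obtain x where x: "x \<in> B1" "x \<notin> B2" by blast
  have B1: "B1 \<in> L" using maximal_inD[OF Suc.prems(1)] .
  have "B1 - {x} \<in> L" using indep_subset[OF B1] by blast
  moreover have "\<not> maximal_in L (B1 - {x})" using B1 x unfolding maximal_in_def by blast
  ultimately obtain y where y: "y \<in> B2 - (B1 - {x})" "insert y (B1 - {x}) \<in> L"
    using base_augment[OF Suc.prems(2)] by blast
  define B1' where "B1' = insert y (B1 - {x})"
  have "y \<notin> B1" using x y by blast
  have "maximal_in L B1'"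
  proof (rule ccontr)
    assume "\<not> maximal_in L B1'"
    then obtain z where "z \<in> B1 - B1'" "insert z B1' \<in> L"
      using base_augment[OF Suc.prems(1)] y(2) B1'_def by blast
    moreover have "z = x" using \<open>z \<in> B1 - B1'\<close> B1'_def by blast
    moreover have "insert x B1' = insert y B1" using B1'_def x by blast
    ultimately have "insert y B1 \<in> L" by simp
    then show False using maximal_in_insert[OF Suc.prems(1) \<open>y \<notin> B1\<close>] by contradiction
  qed
  moreover have "B1' - B2 = (B1 - B2) - {x}" using B1'_def y by blast
  then have "n = card (B1' - B2)" "finite (B1' - B2)"
    using Suc.hyps(2) Suc.prems(3) x by simp_all
  ultimately have "finite (B2 - B1') \<and> card (B2 - B1') \<le> n"
    using Suc.hyps(1)[of B1'] Suc.prems(2) by simp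
  moreover have "B2 - B1 = insert y (B2 - B1')" using B1'_def y x by blast
  ultimately show ?case using Suc.hyps(2) by (simp add: card_insert_if)
qed

lemma card_basis_of_diff_le:
  assumes S: "basis_of L X S" and T: "basis_of L X T" and fin: "finite (S - T)"
  shows "finite (T - S) \<and> card (T - S) \<le> card (S - T)"
proof -
  obtain T' where T': "maximal_in L T'" "T \<subseteq> T'"
    using exists_base basis_ofD(1)[OF T] by blast
  obtain S' where S': "maximal_in L S'" "S \<subseteq> S'" "S' \<subseteq> S \<union> T'"
    using exists_base_between basis_ofD(1)[OF S] T'(1) by blast
  have "T' \<inter> X = T" "S' \<inter> X = S"
    using basis_of_eq_Int[OF T T'(2) maximal_inD[OF T'(1)]]
      basis_of_eq_Int[OF S S'(2) maximal_inD[OF S'(1)]] .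
  then have sub1: "S' - T' \<subseteq> S - T" and sub2: "T - S \<subseteq> T' - S'"
    using S'(3) T'(2) basis_ofD(2)[OF T] by blast+
  have fin': "finite (T' - S')" and card': "card (T' - S') \<le> card (S' - T')"
    using card_base_diff_le S'(1) T'(1) finite_subset[OF sub1 fin] by blast+
  have "card (T - S) \<le> card (T' - S')" using card_mono[OF fin' sub2] .
  moreover have "card (S' - T') \<le> card (S - T)" using card_mono[OF fin sub1] .
  ultimately show ?thesis using finite_subset[OF sub2 fin'] card' by linarith
qed

lemma indep_augment_finite:
  assumes I: "I \<in> L" "finite I" and J: "J \<in> L" "finite J" and card: "card I < card J"
  shows "\<exists>j\<in>J - I. insert j I \<in> L"
proof (rule ccontr)
  assume no_aug: "\<not> (\<exists>j\<in>J - I. insert j I \<in> L)"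
  have "basis_of L (I \<union> J) I"
    unfolding basis_of_def
  proof (intro conjI ballI impI)
    fix T assume "T \<in> L" "I \<subseteq> T" "T \<subseteq> I \<union> J"
    show "T = I"
    proof (rule ccontr)
      assume "T \<noteq> I"
      then obtain j where "j \<in> T - I" using \<open>I \<subseteq> T\<close> by blast
      then have "insert j I \<in> L" using indep_subset \<open>T \<in> L\<close> \<open>I \<subseteq> T\<close> by blast
      then show False using no_aug \<open>j \<in> T - I\<close> \<open>T \<subseteq> I \<union> J\<close> by blast
    qed
  qed (use I in auto)
  moreover obtain T where T: "basis_of L (I \<union> J) T" "J \<subseteq> T"
    using exists_basis[OF J(1), of "I \<union> J"] indep_subset_ground I J by blast
  ultimately have "card (T - I) \<le> card (I - T)"
    using card_basis_of_diff_le I(2) by blast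
  moreover have "finite T" using basis_ofD(2)[OF T(1)] I(2) J(2) finite_subset by blast
  then have "card (J - I) \<le> card (T - I)" "card (I - T) \<le> card (I - J)"
    using T(2) I(2) by (auto intro!: card_mono)
  ultimately have "card (J - I) \<le> card (I - J)" by linarith
  moreover have "card (J - I) = card J - card (I \<inter> J)" "card (I - J) = card I - card (I \<inter> J)"
    using I(2) J(2) by (simp_all add: card_Diff_subset_Int Int_commute)
  moreover have "card (I \<inter> J) \<le> card I" using I(2) by (simp add: card_mono)
  ultimately show False using card by linarith
qed

lemma card_indep_le_basis_of:
  assumes T: "basis_of L X T" and "finite X" "I \<in> L" "I \<subseteq> X"
  shows "card I \<le> card T"
proof (rule ccontr)
  have "finite T" "finite I" using basis_ofD(2)[OF T] assms(2,4) finite_subset by blast+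
  moreover assume "\<not> card I \<le> card T"
  ultimately obtain i where i: "i \<in> I - T" "insert i T \<in> L"
    using indep_augment_finite basis_ofD(1)[OF T] assms(3) by (meson not_le)
  then have "insert i T = T" using basis_ofD(3)[OF T] basis_ofD(2)[OF T] assms(4) by blast
  then show False using i by blast
qed

text \<open>Transitivity of the span, for finite sets: Y spans D and D spans x.\<close>

lemma dependent_insert_trans:
  assumes Y: "Y \<in> L" "finite Y" "x \<notin> Y" and D: "D \<in> L" "finite D" "insert x D \<notin> L"
    and spans: "\<forall>t\<in>D - Y. insert t Y \<notin> L"
  shows "insert x Y \<notin> L"
proof
  assume xY: "insert x Y \<in> L"
  define Z where "Z = Y \<union> insert x D"
  have "finite Z" "Z \<subseteq> E"
    using Y D indep_subset_ground[OF xY] indep_subset_ground[OF D(1)] unfolding Z_def by auto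
  moreover have "D \<subseteq> Z" unfolding Z_def by blast
  ultimately obtain T where T: "basis_of L Z T" "D \<subseteq> T"
    using exists_basis[OF D(1)] by blast
  have "x \<notin> T"
  proof
    assume "x \<in> T"
    then have "insert x D \<subseteq> T" using T(2) by blast
    then show False using indep_subset[OF basis_ofD(1)[OF T(1)]] D(3) by blast
  qed
  have "insert x Y \<subseteq> Z" unfolding Z_def by blast
  then have "card (insert x Y) \<le> card T"
    using card_indep_le_basis_of[OF T(1) \<open>finite Z\<close> xY] by blast
  moreover have "card T \<le> card Y"
  proof (rule ccontr)
    assume "\<not> card T \<le> card Y"
    then obtain t where t: "t \<in> T - Y" "insert t Y \<in> L"
      using indep_augment_finite[OF Y(1,2) basis_ofD(1)[OF T(1)]] \<open>finite Z\<close>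
        basis_ofD(2)[OF T(1)] finite_subset by (meson not_le)
    moreover have "t \<in> D" using t(1) \<open>x \<notin> T\<close> basis_ofD(2)[OF T(1)] unfolding Z_def by blast
    ultimately show False using spans by blast
  qed
  ultimately show False using Y by simp
qed

lemma indep_in_L_fin: "I \<in> L \<Longrightarrow> I \<in> L_fin E L"
  unfolding L_fin_def using indep_subset_ground indep_subset by blast

text \<open>The finite witnesses C b of the dependence of insert b A give a finite Y \<subseteq> A spanning a
  finite D \<subseteq> B that spans x; so Y spans x, although insert x Y \<subseteq> insert x A is independent.\<close>

lemma L_fin_augment:
  assumes B: "maximal_in (L_fin E L) B" and A: "A \<in> L_fin E L"
    and x: "x \<notin> A" "insert x A \<in> L_fin E L"
  shows "\<exists>b\<in>B - A. insert b A \<in> L_fin E L"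
proof (rule ccontr)
  assume no_aug: "\<not> (\<exists>b\<in>B - A. insert b A \<in> L_fin E L)"
  have BL: "B \<in> L_fin E L" using maximal_inD[OF B] .
  have dep: "\<forall>b\<in>B - A. \<exists>C. C \<subseteq> A \<and> finite C \<and> insert b C \<notin> L"
  proof
    fix b assume b: "b \<in> B - A"
    then have "b \<in> E" "insert b A \<notin> L_fin E L" using L_fin_ground[OF BL] no_aug by blast+
    then obtain C where "C \<subseteq> A" "finite C" "insert b C \<notin> L"
      by (rule L_fin_insert_obtain_finite_dependent[OF A])
    then show "\<exists>C. C \<subseteq> A \<and> finite C \<and> insert b C \<notin> L" by blast
  qed
  obtain C where C: "\<forall>b\<in>B - A. C b \<subseteq> A \<and> finite (C b) \<and> insert b (C b) \<notin> L"
    using bchoice[OF dep] by blast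
  have "x \<notin> B" using no_aug x by blast
  then have "insert x B \<notin> L_fin E L" using maximal_in_insert[OF B] by blast
  moreover have "x \<in> E" using L_fin_ground[OF x(2)] by blast
  ultimately obtain D where D: "D \<subseteq> B" "finite D" "insert x D \<notin> L"
    using L_fin_insert_obtain_finite_dependent[OF BL] by blast
  define Y where "Y = (D \<inter> A) \<union> (\<Union>b\<in>D - A. C b)"
  have "D - A \<subseteq> B - A" using D(1) by blast
  then have "Y \<subseteq> A" "finite Y" using C D(2) unfolding Y_def by auto
  then have "insert x Y \<in> L"
    using L_fin_finite_subset[OF x(2), of "insert x Y"] by blast
  moreover have "insert x Y \<notin> L"
  proof (rule dependent_insert_trans)
    show "Y \<in> L" using \<open>Y \<subseteq> A\<close> \<open>finite Y\<close> L_fin_finite_subset[OF A] by blast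
    show "D \<in> L" using D L_fin_finite_subset[OF BL] by blast
    show "\<forall>t\<in>D - Y. insert t Y \<notin> L"
    proof
      fix t assume t: "t \<in> D - Y"
      then have "t \<in> B - A" "C t \<subseteq> Y" using D(1) unfolding Y_def by blast+
      then have "insert t (C t) \<notin> L" "insert t (C t) \<subseteq> insert t Y" using C by blast+
      then show "insert t Y \<notin> L" using indep_subset by blast
    qed
    show "x \<notin> Y" using \<open>Y \<subseteq> A\<close> x(1) by blast
  qed (use \<open>finite Y\<close> D in simp_all)
  ultimately show False by contradiction
qed

text \<open>B may be infinite, but the exchange counting inside B \<union> C works because T1 - B \<subseteq> C
  is finite.\<close>

lemma basis_of_insert_dependent:
  assumes B: "basis_of L Y B" and C: "C \<subseteq> Y" "finite C" "C \<in> L" "insert e C \<notin> L"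
    and "e \<notin> B"
  shows "insert e B \<notin> L"
proof
  assume "insert e B \<in> L"
  then obtain B0 where B0: "maximal_in L B0" "insert e B \<subseteq> B0"
    using exists_base by blast
  define Y' where "Y' = B \<union> C"
  have BY': "basis_of L Y' B" using basis_of_subset[OF B] C(1) basis_ofD(2)[OF B] unfolding Y'_def by blast
  have "Y' \<subseteq> E" using indep_subset_ground basis_ofD(1)[OF B] C(3) unfolding Y'_def by blast
  then obtain T1 where T1: "basis_of L Y' T1" "C \<subseteq> T1"
    using exists_basis[OF C(3)] unfolding Y'_def by blast
  obtain T2 where T2: "maximal_in L T2" "T1 \<subseteq> T2" "T2 \<subseteq> T1 \<union> B0"
    using exists_base_between[OF basis_ofD(1)[OF T1(1)] B0(1)] by blast
  have "e \<notin> T2"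
    using indep_subset[of T2 "insert e C"] maximal_inD[OF T2(1)] T2(2) T1(2) C(4) by blast
  have "T2 \<inter> Y' = T1" using basis_of_eq_Int[OF T1(1) T2(2) maximal_inD[OF T2(1)]] .
  then have sub: "insert e (B - T1) \<subseteq> B0 - T2"
    using B0(2) \<open>e \<notin> T2\<close> unfolding Y'_def by blast
  have sub': "T2 - B0 \<subseteq> T1 - B" using T2(3) B0(2) by blast
  have "T1 - B \<subseteq> C" using basis_ofD(2)[OF T1(1)] unfolding Y'_def by blast
  then have fin: "finite (T1 - B)" using C(2) finite_subset by blast
  have fin0: "finite (B0 - T2)" and card0: "card (B0 - T2) \<le> card (T2 - B0)"
    using card_base_diff_le[OF T2(1) B0(1) finite_subset[OF sub' fin]] by blast+
  have "finite (B - T1)" using finite_subset[OF sub fin0] by simp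
  have "card (B - T1) + 1 \<le> card (B0 - T2)"
    using card_mono[OF fin0 sub] \<open>finite (B - T1)\<close> \<open>e \<notin> B\<close> by simp
  moreover have "card (T2 - B0) \<le> card (T1 - B)" using card_mono[OF fin sub'] .
  moreover have "card (T1 - B) \<le> card (B - T1)"
    using card_basis_of_diff_le[OF BY' T1(1) \<open>finite (B - T1)\<close>] by blast
  ultimately show False using card0 by linarith
qed

lemma base_if_basis_of_L_fin_base:
  assumes F: "maximal_in (L_fin E L) F" and B: "basis_of L F B"
  shows "maximal_in L B"
proof (rule ccontr)
  assume "\<not> maximal_in L B"
  then obtain B0 where B0: "maximal_in L B0" "B \<subseteq> B0" "B0 \<noteq> B"
    using exists_base[OF basis_ofD(1)[OF B]] by blast
  then obtain e where e: "e \<in> B0" "e \<notin> B" by blast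
  have eB: "insert e B \<in> L" using indep_subset[OF maximal_inD[OF B0(1)]] e(1) B0(2) by blast
  then have "e \<notin> F" using basis_ofD(2,3)[OF B] e(2) by blast
  then have "insert e F \<notin> L_fin E L" using maximal_in_insert[OF F] by blast
  moreover have FL: "F \<in> L_fin E L" using maximal_inD[OF F] .
  moreover have "e \<in> E" using indep_subset_ground[OF eB] by blast
  ultimately obtain C where C: "C \<subseteq> F" "finite C" "insert e C \<notin> L"
    using L_fin_insert_obtain_finite_dependent[of F E L e] by blast
  then have "insert e B \<notin> L"
    using basis_of_insert_dependent[OF B] L_fin_finite_subset[OF FL] e(2) by blast
  then show False using eB by contradiction
qed

lemma L_nfin_subset:
  assumes "F \<in> L_nfin E L" "G \<subseteq> F"
  shows "G \<in> L_nfin E L"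
proof -
  obtain S where S: "S \<in> L" "S \<subseteq> F" "finite (F - S)"
    using L_nfinE[OF assms(1)] by blast
  have "G - G \<inter> S \<subseteq> F - S" using assms(2) by blast
  then have "finite (G - G \<inter> S)" using S(3) finite_subset by blast
  moreover have "G \<in> L_fin E L"
    using L_fin_subset assms L_nfin_subset_L_fin by blast
  moreover have "G \<inter> S \<in> L" using indep_subset[OF S(1)] by blast
  ultimately show ?thesis using L_nfinI[of G E L "G \<inter> S"] by blast
qed

lemma matroid_L_fin: "matroid E (L_fin E L)"
  unfolding matroid_def
proof (intro conjI allI impI; (elim conjE)?)
  show "\<forall>I\<in>L_fin E L. I \<subseteq> E" using L_fin_ground by blast
  show "{} \<in> L_fin E L" using indep_in_L_fin[OF empty_indep] .
  show "B \<in> L_fin E L" if "A \<in> L_fin E L" "B \<subseteq> A" for A B using L_fin_subset that .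
  show "\<exists>S. maximal_in {S \<in> L_fin E L. A \<subseteq> S \<and> S \<subseteq> X} S"
    if "A \<in> L_fin E L" "A \<subseteq> X" "X \<subseteq> E" for A X using L_fin_maximal_exists that .
  fix A B
  assume B: "maximal_in (L_fin E L) B" and A: "A \<in> L_fin E L" "\<not> maximal_in (L_fin E L) A"
  then obtain A' where "A' \<in> L_fin E L" "A \<subseteq> A'" "A' \<noteq> A" unfolding maximal_in_def by blast
  then obtain x where x: "x \<in> A'" "x \<notin> A" by blast
  then have "insert x A \<subseteq> A'" using \<open>A \<subseteq> A'\<close> by blast
  then have "insert x A \<in> L_fin E L" using L_fin_subset \<open>A' \<in> L_fin E L\<close> by blast
  then show "\<exists>b\<in>B - A. insert b A \<in> L_fin E L" using L_fin_augment[OF B A(1) x(2)] by blast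
qed

lemma nearly_finitary_iff_L_fin_bases_in_L_nfin:
  "nearly_finitary E L \<longleftrightarrow> (\<forall>F. maximal_in (L_fin E L) F \<longrightarrow> F \<in> L_nfin E L)"
proof (intro iffI allI impI)
  fix F assume nf: "nearly_finitary E L" and F: "maximal_in (L_fin E L) F"
  have FL: "F \<in> L_fin E L" using maximal_inD[OF F] .
  obtain B where B: "basis_of L F B"
    using exists_basis[OF empty_indep _ L_fin_ground[OF FL]] by blast
  then have "finite (F - B)"
    using nf F base_if_basis_of_L_fin_base[OF F B] basis_ofD(2)[OF B]
    unfolding nearly_finitary_def by blast
  then show "F \<in> L_nfin E L" using L_nfinI[OF FL basis_ofD(1,2)[OF B]] by blast
next
  assume H: "\<forall>F. maximal_in (L_fin E L) F \<longrightarrow> F \<in> L_nfin E L"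
  show "nearly_finitary E L"
    unfolding nearly_finitary_def
  proof (intro allI impI, elim conjE)
    fix F B assume F: "maximal_in (L_fin E L) F" and B: "maximal_in L B" "B \<subseteq> F"
    obtain S where S: "S \<in> L" "S \<subseteq> F" "finite (F - S)"
      using H F L_nfinE by blast
    have "F \<subseteq> E" using L_fin_ground[OF maximal_inD[OF F]] .
    then obtain B' where B': "basis_of L F B'" "S \<subseteq> B'"
      using exists_basis[OF S(1,2)] by blast
    have "maximal_in L B'" using base_if_basis_of_superset_of_base[OF B'(1) B] .
    moreover have "B - B' \<subseteq> F - S" using B(2) B'(2) by blast
    ultimately have "finite (B' - B)"
      using card_base_diff_le[OF B(1)] S(3) finite_subset by blast
    moreover have "F - B \<subseteq> (F - S) \<union> (B' - B)" using B'(2) by blast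
    ultimately show "finite (F - B)" using S(3) finite_subset by blast
  qed
qed

end

lemma L_nfin_eq_L_fin_if_nearly_finitary:
  assumes M: "matroid E L" and nf: "nearly_finitary E L"
  shows "L_nfin E L = L_fin E L"
proof
  show "L_nfin E L \<subseteq> L_fin E L" by (rule L_nfin_subset_L_fin)
  show "L_fin E L \<subseteq> L_nfin E L"
  proof
    fix F assume "F \<in> L_fin E L"
    then obtain F' where "maximal_in (L_fin E L) F'" "F \<subseteq> F'"
      using exists_base[OF matroid_L_fin[OF M]] by blast
    then show "F \<in> L_nfin E L"
      using nf nearly_finitary_iff_L_fin_bases_in_L_nfin[OF M] L_nfin_subset[OF M] by blast
  qed
qed

lemma L_fin_base_in_L_nfin_if_matroid_L_nfin:
  assumes M: "matroid E (L_nfin E L)" and F: "maximal_in (L_fin E L) F"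
  shows "F \<in> L_nfin E L"
proof -
  have FL: "F \<in> L_fin E L" using maximal_inD[OF F] .
  obtain S where S: "basis_of (L_nfin E L) F S"
    using exists_basis[OF M empty_indep[OF M] _ L_fin_ground[OF FL]] by blast
  then have "S = F" using basis_of_L_nfin_eq FL by blast
  then show ?thesis using basis_ofD(1)[OF S] by simp
qed

theorem matroid_L_nfin_iff_nearly_finitary:
  assumes "matroid E L"
  shows "matroid E (L_nfin E L) \<longleftrightarrow> nearly_finitary E L"
  using L_fin_base_in_L_nfin_if_matroid_L_nfin matroid_L_fin[OF assms]
    nearly_finitary_iff_L_fin_bases_in_L_nfin[OF assms]
    L_nfin_eq_L_fin_if_nearly_finitary[OF assms]
  by metis

theorem theorem4p1p2:
  shows "(\<forall>(E::'a set) L. matroid E L \<and> nearly_finitary E L \<longrightarrow>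
            (\<exists>k. k_nearly_finitary k E L))
     \<longleftrightarrow>
         (\<forall>(E::'a set) L. matroid E L \<and> \<not> (\<exists>k. k_nearly_finitary k E L) \<longrightarrow>
            \<not> matroid E (L_nfin E L))"
  using matroid_L_nfin_iff_nearly_finitary by blast

end
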